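(* Let $P(\lambda)$ be an $n\times n$ singular matrix polynomial of degree $d$ and normal rank $n-k$, and let $S_R(\lambda)=[x_1(\lambda)\ \dots\ x_k(\lambda)]$ be an $n\times k$ matrix polynomial whose columns form a minimal basis of the right nullspace of $P(\lambda)$, with right minimal indices $m_1,\dots,m_k$. Then there exists $V\in\mathbb C^{n\times k}$ such that the polynomial $\det(V^*S_R(\lambda))$ has exactly $M=m_1+\cdots+m_k$ simple zeros.
   Context: Normal rank: $\mathrm{nrank}(P)=\max_{\zeta\in\mathbb C}\mathrm{rank}\,P(\zeta)$; $P$ is singular if $\det P(\lambda)\equiv0$. The right nullspace of $P$ is $\{x(\lambda)\in\mathbb C(\lambda)^n: P(\lambda)x(\lambda)\equiv0\}$. A polynomial basis of it is minimal if the sum of the degrees of its vectors is minimal among all polynomial bases; these degrees are the right minimal indices. *)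

theory Defs
  imports "Jordan_Normal_Form.DL_Rank" "Jordan_Normal_Form.Schur_Decomposition"
    "HOL-Computational_Algebra.Polynomial" "HOL-Computational_Algebra.Fraction_Field"
begin

text \<open>Matrix polynomials are represented as matrices with entries in complex poly.
  Rational vectors (elements of C(lambda)^n) have entries in complex poly fract.\<close>

type_synonym pmat = "complex poly mat"

definition peval :: "pmat \<Rightarrow> complex \<Rightarrow> complex mat" where
  "peval P z = map_mat (\<lambda>p. poly p z) P"

definition nrank :: "pmat \<Rightarrow> nat" where
  "nrank P = Max {vec_space.rank (dim_row P) (peval P z) | z. True}"

definition mdeg :: "pmat \<Rightarrow> nat" where
  "mdeg P = Max ({degree (P $$ (i,j)) | i j. i < dim_row P \<and> j < dim_col P} \<union> {0})"

definition vdeg :: "complex poly vec \<Rightarrow> nat" where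
  "vdeg v = Max ({degree (v $ i) | i. i < dim_vec v} \<union> {0})"

definition singular_pmat :: "pmat \<Rightarrow> bool" where
  "singular_pmat P \<longleftrightarrow> dim_row P = dim_col P \<and> det P = 0"

definition fmat :: "pmat \<Rightarrow> complex poly fract mat" where
  "fmat P = map_mat to_fract P"

definition right_nullspace :: "pmat \<Rightarrow> complex poly fract vec set" where
  "right_nullspace P = {x. dim_vec x = dim_col P \<and> fmat P *\<^sub>v x = 0\<^sub>v (dim_row P)}"

definition poly_basis_right_nullspace :: "pmat \<Rightarrow> pmat \<Rightarrow> bool" where
  "poly_basis_right_nullspace P S \<longleftrightarrow>
     dim_row S = dim_col P \<and>
     (\<forall>i < dim_col S. map_vec to_fract (col S i) \<in> right_nullspace P) \<and>
     (\<forall>c. dim_vec c = dim_col S \<longrightarrow> fmat S *\<^sub>v c = 0\<^sub>v (dim_row S) \<longrightarrow> c = 0\<^sub>v (dim_col S)) \<and>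
     (\<forall>x \<in> right_nullspace P. \<exists>c. dim_vec c = dim_col S \<and> x = fmat S *\<^sub>v c)"

definition col_deg_sum :: "pmat \<Rightarrow> nat" where
  "col_deg_sum S = (\<Sum>i < dim_col S. vdeg (col S i))"

definition minimal_basis_right_nullspace :: "pmat \<Rightarrow> pmat \<Rightarrow> bool" where
  "minimal_basis_right_nullspace P S \<longleftrightarrow>
     poly_basis_right_nullspace P S \<and>
     (\<forall>T. poly_basis_right_nullspace P T \<longrightarrow> col_deg_sum S \<le> col_deg_sum T)"

definition num_simple_zeros :: "complex poly \<Rightarrow> nat" where
  "num_simple_zeros q = card {z. poly q z = 0 \<and> order z q = 1}"

definition const_pmat :: "complex mat \<Rightarrow> pmat" where
  "const_pmat V = map_mat (\<lambda>c. [:c:]) V"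

end

theory Submission
  imports Defs "HOL-Computational_Algebra.Field_as_Ring"
begin

text \<open>
  Let \<open>m\<^sub>i\<close> be the column degrees of \<open>S\<close> and \<open>M = \<Sum>m\<^sub>i\<close>. Minimality gives two properties:
  \<open>S(\<zeta>)\<close> has independent columns for every \<open>\<zeta>\<close>, and so has the matrix of the coefficients of
  \<open>\<lambda>^m\<^sub>i\<close> in column \<open>i\<close>; otherwise a column could be replaced by a vector of smaller degree
  and the new columns would still form a basis.

  For constant \<open>W\<close>, \<open>det (W S)\<close> has degree at most \<open>M\<close>. Choose the rows of \<open>W\<close> one by one:
  expanding along the new row, \<open>det (W S) = \<Sum>\<^sub>l w\<^sub>l y\<^sub>l\<close> with \<open>y = S C\<close>, where \<open>C\<close> are the signed
  minors, one of which is the determinant of the previous step. By the two properties the \<open>y\<^sub>l\<close>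
  have no common multiple root and some \<open>y\<^sub>l\<close> has a nonzero coefficient at \<open>\<lambda>\<^sup>M\<close>. A generic
  combination of such polynomials has no multiple root: in a pencil \<open>g + t h\<close> a point is a
  multiple root for at most one \<open>t\<close> unless it is one of both \<open>g\<close> and \<open>h\<close>, and all multiple roots
  lie among the zeros of the Wronskian \<open>g h' - g' h\<close> unless \<open>g\<close> and \<open>h\<close> are proportional.
  So \<open>det (W S)\<close> has degree \<open>M\<close> and \<open>M\<close> simple zeros, and \<open>V = W\<^sup>*\<close>.
\<close>

section \<open>Multiple roots in pencils of polynomials\<close>

definition multiple_root :: "'a::idom poly \<Rightarrow> 'a \<Rightarrow> bool" where
  "multiple_root p z \<longleftrightarrow> poly p z = 0 \<and> poly (pderiv p) z = 0"

lemma multiple_root_0 [simp]: "multiple_root 0 z"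
  by (simp add: multiple_root_def)

lemma rsquarefree_iff_no_multiple_root:
  "rsquarefree p \<longleftrightarrow> (\<forall>z. \<not> multiple_root p z)" for p :: "'a::field_char_0 poly"
  by (simp add: rsquarefree_roots multiple_root_def)

lemma num_simple_zeros_rsquarefree:
  assumes "rsquarefree p"
  shows "num_simple_zeros p = degree p"
proof -
  have "p \<noteq> 0"
    using assms by (simp add: rsquarefree_def)
  then have "{z. poly p z = 0 \<and> order z p = 1} = {z. poly p z = 0}"
    using assms rsquarefree_root_order by auto
  then show ?thesis
    using rsquarefree_card_degree[OF \<open>p \<noteq> 0\<close>] assms by (simp add: num_simple_zeros_def)
qed

lemma multiple_root_add_smult_iff:
  "multiple_root (g + smult t h) z \<longleftrightarrow>
     poly g z + t * poly h z = 0 \<and> poly (pderiv g) z + t * poly (pderiv h) z = 0"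
  for g h :: "'a::idom poly"
  by (simp add: multiple_root_def pderiv_add pderiv_smult)

lemma multiple_root_pencil_unique:
  fixes g h :: "'a::idom poly"
  assumes "multiple_root (g + smult s h) z" "multiple_root (g + smult t h) z" "s \<noteq> t"
  shows "multiple_root g z \<and> multiple_root h z"
proof -
  have "(s - t) * poly h z = (poly g z + s * poly h z) - (poly g z + t * poly h z)"
    and "(s - t) * poly (pderiv h) z
      = (poly (pderiv g) z + s * poly (pderiv h) z) - (poly (pderiv g) z + t * poly (pderiv h) z)"
    by (simp_all add: algebra_simps)
  then have "(s - t) * poly h z = 0" "(s - t) * poly (pderiv h) z = 0"
    using assms(1,2) unfolding multiple_root_add_smult_iff by simp_all
  then have "multiple_root h z"
    using assms(3) by (simp add: multiple_root_def)
  then show ?thesis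
    using assms(1) by (simp add: multiple_root_def pderiv_add pderiv_smult)
qed

lemma wronskian_eq_0_imp_proportional:
  fixes g h :: "'a::{field_char_0,field_gcd} poly"
  assumes "h \<noteq> 0" and "g * pderiv h = pderiv g * h"
  shows "\<exists>c. g = smult c h"
proof -
  define d where "d = gcd g h"
  obtain g' h' where g: "g = d * g'" and h: "h = d * h'"
    unfolding d_def by (meson dvd_def gcd_dvd1 gcd_dvd2)
  have "d \<noteq> 0"
    using assms(1) d_def by auto
  then have coprime: "coprime g' h'"
    using g h unfolding d_def by (intro gcd_coprime[of g h]) (auto simp: mult.commute)
  have "d * d * (g' * pderiv h' - pderiv g' * h') = 0"
    using assms(2) unfolding g h pderiv_mult by (simp add: algebra_simps)
  then have wr: "g' * pderiv h' = pderiv g' * h'"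
    using \<open>d \<noteq> 0\<close> by simp
  then have "g' dvd pderiv g' * h'"
    by (metis dvd_triv_left)
  with coprime have "degree g' = 0"
    by (simp add: coprime_dvd_mult_left_iff)
  moreover from wr have "h' dvd g' * pderiv h'"
    by simp
  with coprime have "degree h' = 0"
    by (simp add: coprime_commute coprime_dvd_mult_right_iff)
  ultimately obtain a b where "g' = [:a:]" "h' = [:b:]" "b \<noteq> 0"
    using assms(1) h by (metis degree_eq_zeroE mult_zero_right pCons_0_0)
  then have "g = smult (a / b) h"
    unfolding g h by simp
  then show ?thesis ..
qed

lemma finite_pencil_multiple_roots_in:
  fixes g h :: "'a::idom poly"
  assumes "finite Z" and "\<not> (\<exists>z\<in>Z. multiple_root g z \<and> multiple_root h z)"
  shows "finite {t. \<exists>z\<in>Z. multiple_root (g + smult t h) z}"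
proof -
  have "finite {t. multiple_root (g + smult t h) z}" if "z \<in> Z" for z
  proof (cases "\<exists>s. multiple_root (g + smult s h) z")
    case True
    then obtain s where "multiple_root (g + smult s h) z" ..
    then have "{t. multiple_root (g + smult t h) z} \<subseteq> {s}"
      using multiple_root_pencil_unique assms(2) that by blast
    then show ?thesis
      using finite_subset by blast
  qed simp
  then have "finite (\<Union>z\<in>Z. {t. multiple_root (g + smult t h) z})"
    using assms(1) by blast
  moreover have "{t. \<exists>z\<in>Z. multiple_root (g + smult t h) z} = (\<Union>z\<in>Z. {t. multiple_root (g + smult t h) z})"
    by blast
  ultimately show ?thesis
    by simp
qed

lemma finite_pencil_multiple_roots:
  fixes g h :: "'a::{field_char_0,field_gcd} poly"
  assumes "\<not> (\<exists>z. multiple_root g z \<and> multiple_root h z)"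
  shows "finite {t. \<exists>z. multiple_root (g + smult t h) z}"
proof -
  \<comment> \<open>Each multiple root of a member of the pencil is a zero of the Wronskian.\<close>
  define wr where "wr = g * pderiv h - pderiv g * h"
  have wr_root: "poly wr z = 0" if "multiple_root (g + smult t h) z" for t z
  proof -
    have "poly g z = - t * poly h z" "poly (pderiv g) z = - t * poly (pderiv h) z"
      using that unfolding multiple_root_add_smult_iff by (auto simp: eq_neg_iff_add_eq_0)
    then show ?thesis
      by (simp add: wr_def algebra_simps)
  qed
  consider "wr \<noteq> 0" | "h = 0" | "wr = 0" "h \<noteq> 0"
    by blast
  then show ?thesis
  proof cases
    case 1
    have "{t. \<exists>z. multiple_root (g + smult t h) z}
        = {t. \<exists>z\<in>{z. poly wr z = 0}. multiple_root (g + smult t h) z}"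
      using wr_root by blast
    then show ?thesis
      using finite_pencil_multiple_roots_in[OF poly_roots_finite[OF 1]] assms by simp
  next
    case 2
    then show ?thesis
      using assms by simp
  next
    case 3
    then obtain c where c: "g = smult c h"
      using wronskian_eq_0_imp_proportional unfolding wr_def by auto
    have "t = - c" if "multiple_root (g + smult t h) z" for t z
    proof (rule ccontr)
      assume "t \<noteq> - c"
      then have "multiple_root h z"
        using that unfolding c multiple_root_def
        by (auto simp: pderiv_smult smult_add_left[symmetric] add_eq_0_iff)
      then show False
        using assms unfolding c by (auto simp: multiple_root_def pderiv_smult)
    qed
    then have "{t. \<exists>z. multiple_root (g + smult t h) z} \<subseteq> {- c}"
      by blast
    then show ?thesis
      using finite_subset by blast
  qed
qed

lemma finite_roots_of_linear_pencil:
  fixes a b :: "'a::field"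
  assumes "a \<noteq> 0 \<or> b \<noteq> 0"
  shows "finite {t. a + t * b = 0}"
proof (cases "b = 0")
  case False
  then have "{t. a + t * b = 0} \<subseteq> {- a / b}"
    by (auto simp: field_simps eq_neg_iff_add_eq_0)
  then show ?thesis
    using finite_subset by blast
qed (use assms in simp)

lemma exists_combination_no_multiple_root:
  fixes y :: "'i \<Rightarrow> 'a::{field_char_0,field_gcd} poly"
  assumes "finite L"
    and "\<not> (\<exists>z. multiple_root g z \<and> (\<forall>l\<in>L. multiple_root (y l) z))"
    and "coeff g D \<noteq> 0 \<or> (\<exists>l\<in>L. coeff (y l) D \<noteq> 0)"
  shows "\<exists>w. coeff (g + (\<Sum>l\<in>L. smult (w l) (y l))) D \<noteq> 0 \<and>
             (\<forall>z. \<not> multiple_root (g + (\<Sum>l\<in>L. smult (w l) (y l))) z)"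
  using assms
proof (induction L arbitrary: g rule: finite_induct)
  case empty
  then show ?case
    by simp
next
  case (insert a L)
  \<comment> \<open>The coefficient \<open>t\<close> of \<open>y a\<close> only has to avoid finitely many values: those for which
    \<open>g + t y a\<close> has a multiple root shared by all remaining \<open>y l\<close>, and possibly a zero of the
    coefficient at \<open>D\<close>.\<close>
  define Q where "Q = {z. \<forall>l\<in>L. multiple_root (y l) z}"
  define bad_root where "bad_root = {t. \<exists>z\<in>Q. multiple_root (g + smult t (y a)) z}"
  define bad_coeff where
    "bad_coeff = {t. coeff (g + smult t (y a)) D = 0 \<and> \<not> (\<exists>l\<in>L. coeff (y l) D \<noteq> 0)}"
  have no_common: "\<not> (\<exists>z\<in>Q. multiple_root g z \<and> multiple_root (y a) z)"
    using insert.prems(1) by (auto simp: Q_def)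
  have "finite bad_root"
  proof (cases "\<exists>l\<in>L. y l \<noteq> 0")
    case True
    then obtain l where "l \<in> L" "y l \<noteq> 0" ..
    then have "Q \<subseteq> {z. poly (y l) z = 0}"
      by (auto simp: Q_def multiple_root_def)
    then have "finite Q"
      using poly_roots_finite[OF \<open>y l \<noteq> 0\<close>] finite_subset by blast
    then show ?thesis
      unfolding bad_root_def by (rule finite_pencil_multiple_roots_in[OF _ no_common])
  next
    case False
    then have "Q = UNIV"
      by (auto simp: Q_def)
    then show ?thesis
      using finite_pencil_multiple_roots no_common unfolding bad_root_def by simp
  qed
  moreover have "finite bad_coeff"
  proof (cases "\<exists>l\<in>L. coeff (y l) D \<noteq> 0")
    case False
    then have "coeff g D \<noteq> 0 \<or> coeff (y a) D \<noteq> 0"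
      using insert.prems(2) by auto
    then have "finite {t. coeff g D + t * coeff (y a) D = 0}"
      by (rule finite_roots_of_linear_pencil)
    then show ?thesis
      by (rule finite_subset[rotated]) (auto simp: bad_coeff_def)
  qed (simp add: bad_coeff_def)
  ultimately obtain t where t: "t \<notin> bad_root" "t \<notin> bad_coeff"
    using ex_new_if_finite[OF infinite_UNIV_char_0, of "bad_root \<union> bad_coeff"] by auto
  obtain w where w: "coeff (g + smult t (y a) + (\<Sum>l\<in>L. smult (w l) (y l))) D \<noteq> 0"
    "\<forall>z. \<not> multiple_root (g + smult t (y a) + (\<Sum>l\<in>L. smult (w l) (y l))) z"
    using insert.IH[of "g + smult t (y a)"] t by (auto simp: bad_root_def bad_coeff_def Q_def)
  have "(\<Sum>l\<in>insert a L. smult ((w(a := t)) l) (y l)) = smult t (y a) + (\<Sum>l\<in>L. smult (w l) (y l))"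
    using insert.hyps by (auto intro!: sum.cong)
  then show ?case
    using w by (intro exI[of _ "w(a := t)"]) (simp add: add.assoc)
qed

section \<open>Column degrees, column deletion and determinants\<close>

definition cols_independent :: "'a::semiring_0 mat \<Rightarrow> bool" where
  "cols_independent A \<longleftrightarrow>
     (\<forall>c. (\<forall>l<dim_row A. (\<Sum>i<dim_col A. A $$ (l,i) * c i) = 0) \<longrightarrow> (\<forall>i<dim_col A. c i = 0))"

definition col_degrees_le :: "(nat \<Rightarrow> nat) \<Rightarrow> 'a::zero poly mat \<Rightarrow> bool" where
  "col_degrees_le m A \<longleftrightarrow> (\<forall>l<dim_row A. \<forall>i<dim_col A. degree (A $$ (l,i)) \<le> m i)"

text \<open>For \<open>m i = vdeg (col A i)\<close> this is the highest-column-degree coefficient matrix; \<open>A\<close> is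
  column reduced iff its columns are independent.\<close>

definition highest_col_coeff_mat :: "(nat \<Rightarrow> nat) \<Rightarrow> 'a::zero poly mat \<Rightarrow> 'a mat" where
  "highest_col_coeff_mat m A = mat (dim_row A) (dim_col A) (\<lambda>(l,i). coeff (A $$ (l,i)) (m i))"

definition delete_col :: "'a mat \<Rightarrow> nat \<Rightarrow> 'a mat" where
  "delete_col A j = mat (dim_row A) (dim_col A - 1) (\<lambda>(l,i). A $$ (l, insert_index j i))"

definition append_row :: "'a mat \<Rightarrow> (nat \<Rightarrow> 'a) \<Rightarrow> 'a mat" where
  "append_row A v = mat (Suc (dim_row A)) (dim_col A) (\<lambda>(r,l). if r < dim_row A then A $$ (r,l) else v l)"

lemma sum_lessThan_Suc_insert_index:
  fixes f :: "nat \<Rightarrow> 'a::comm_monoid_add"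
  assumes "j < Suc k"
  shows "(\<Sum>i<Suc k. f i) = f j + (\<Sum>i<k. f (insert_index j i))"
proof -
  have "(\<Sum>i<Suc k. f i) = f j + sum f ({..<Suc k} - {j})"
    using assms by (intro sum.remove) auto
  also have "{..<Suc k} - {j} = insert_index j ` {..<k}"
    using insert_index_image[OF assms] by (simp add: atLeast0LessThan)
  finally show ?thesis
    by (simp add: sum.reindex insert_index_inj_on)
qed

lemma insert_index_less: "i < k \<Longrightarrow> insert_index j i < Suc k"
  by (simp add: insert_index_def)

lemma cols_independent_delete_col:
  assumes "cols_independent A" and "j < dim_col A"
  shows "cols_independent (delete_col A j)"
  unfolding cols_independent_def
proof (intro allI impI)
  fix c i
  assume comb: "\<forall>l<dim_row (delete_col A j). (\<Sum>i<dim_col (delete_col A j). delete_col A j $$ (l,i) * c i) = 0"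
    and i: "i < dim_col (delete_col A j)"
  obtain k where k: "dim_col A = Suc k"
    using assms(2) by (cases "dim_col A") auto
  define c' where "c' i = (if i = j then 0 else c (delete_index j i))" for i
  have c'_insert: "c' (insert_index j i) = c i" for i
    by (auto simp: c'_def insert_index_def delete_index_def)
  have "(\<Sum>i<dim_col A. A $$ (l,i) * c' i) = 0" if "l < dim_row A" for l
  proof -
    have "(\<Sum>i<dim_col A. A $$ (l,i) * c' i) = (\<Sum>i<k. A $$ (l, insert_index j i) * c i)"
      using assms(2) unfolding k sum_lessThan_Suc_insert_index[OF assms(2)[unfolded k]]
      by (simp add: c'_def c'_insert)
    also have "\<dots> = 0"
      using comb that k by (auto simp: delete_col_def insert_index_less intro!: sum.cong)
    finally show ?thesis .
  qed
  then have "c' (insert_index j i) = 0"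
    using assms(1) i k insert_index_less unfolding cols_independent_def
    by (simp add: delete_col_def)
  then show "c i = 0"
    by (simp add: c'_insert)
qed

lemma dim_peval [simp]:
  "dim_row (peval P z) = dim_row P" "dim_col (peval P z) = dim_col P"
  by (simp_all add: peval_def)

lemma dim_highest_col_coeff_mat [simp]:
  "dim_row (highest_col_coeff_mat m A) = dim_row A" "dim_col (highest_col_coeff_mat m A) = dim_col A"
  by (simp_all add: highest_col_coeff_mat_def)

lemma peval_delete_col: "peval (delete_col S j) z = delete_col (peval S z) j"
  by (rule eq_matI) (auto simp: peval_def delete_col_def insert_index_def)

lemma highest_col_coeff_mat_delete_last_col:
  assumes "dim_col A = Suc k"
  shows "highest_col_coeff_mat m (delete_col A k) = delete_col (highest_col_coeff_mat m A) k"
  using assms by (auto simp: highest_col_coeff_mat_def delete_col_def)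

lemma col_degrees_le_delete_col:
  "col_degrees_le m A \<Longrightarrow> j < dim_col A \<Longrightarrow> col_degrees_le (\<lambda>i. m (insert_index j i)) (delete_col A j)"
  by (auto simp: col_degrees_le_def delete_col_def insert_index_def)

lemma coeff_mult_at_degree_bounds:
  fixes p q :: "'a::comm_semiring_1 poly"
  assumes "degree p \<le> a" and "degree q \<le> b"
  shows "coeff (p * q) (a + b) = coeff p a * coeff q b"
proof -
  have "coeff p i * coeff q (a + b - i) = (if i = a then coeff p a * coeff q b else 0)" for i
    using assms by (cases i a rule: linorder_cases) (auto simp: coeff_eq_0)
  then show ?thesis
    by (simp add: coeff_mult)
qed

lemma degree_det_le_sum_col_degrees:
  fixes A :: "'a::comm_ring_1 poly mat"
  assumes A: "A \<in> carrier_mat K K" and deg: "col_degrees_le \<mu> A"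
  shows "degree (det A) \<le> (\<Sum>i<K. \<mu> i)"
proof -
  have "degree (signof p * (\<Prod>i = 0..<K. A $$ (i, p i))) \<le> (\<Sum>i<K. \<mu> i)"
    if p: "p permutes {0..<K}" for p
  proof -
    have "degree (\<Prod>i = 0..<K. A $$ (i, p i)) \<le> (\<Sum>i = 0..<K. degree (A $$ (i, p i)))"
      using degree_prod_sum_le[of "{0..<K}" "\<lambda>i. A $$ (i, p i)"] by (simp add: o_def)
    also have "\<dots> \<le> (\<Sum>i = 0..<K. \<mu> (p i))"
      using deg A p permutes_in_image by (intro sum_mono) (auto simp: col_degrees_le_def)
    also have "\<dots> = (\<Sum>i<K. \<mu> i)"
      using sum.reindex_bij_betw[OF permutes_imp_bij[OF p], of \<mu>] by (simp add: atLeast0LessThan)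
    finally show ?thesis
      by (simp add: sign_def)
  qed
  then show ?thesis
    unfolding det_def'[OF A] by (intro degree_sum_le) (auto simp: finite_permutations)
qed

lemma const_pmat_mult_index:
  assumes "W \<in> carrier_mat K n" "S \<in> carrier_mat n k" "r < K" "j < k"
  shows "(const_pmat W * S) $$ (r, j) = (\<Sum>l<n. smult (W $$ (r,l)) (S $$ (l,j)))"
  using assms by (auto simp: const_pmat_def scalar_prod_def atLeast0LessThan intro!: sum.cong)

lemma const_pmat_mult_carrier:
  "W \<in> carrier_mat K n \<Longrightarrow> S \<in> carrier_mat n k \<Longrightarrow> const_pmat W * S \<in> carrier_mat K k"
  by (simp add: const_pmat_def)

lemma col_degrees_le_const_pmat_mult:
  assumes "W \<in> carrier_mat K n" "S \<in> carrier_mat n k" "col_degrees_le m S"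
  shows "col_degrees_le m (const_pmat W * S)"
  unfolding col_degrees_le_def
proof (intro allI impI)
  fix r i
  assume "r < dim_row (const_pmat W * S)" "i < dim_col (const_pmat W * S)"
  then have ri: "r < K" "i < k"
    using assms by (auto simp: const_pmat_def)
  have "degree (\<Sum>l<n. smult (W $$ (r,l)) (S $$ (l,i))) \<le> m i"
    using assms(2,3) ri degree_smult_le le_trans
    by (intro degree_sum_le) (fastforce simp: col_degrees_le_def)+
  then show "degree ((const_pmat W * S) $$ (r, i)) \<le> m i"
    using const_pmat_mult_index[OF assms(1,2) ri] by simp
qed

lemma degree_det_const_pmat_mult_le:
  assumes "W \<in> carrier_mat K n" "S \<in> carrier_mat n K" "col_degrees_le \<mu> S"
  shows "degree (det (const_pmat W * S)) \<le> (\<Sum>i<K. \<mu> i)"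
  using assms const_pmat_mult_carrier col_degrees_le_const_pmat_mult
  by (blast intro: degree_det_le_sum_col_degrees)

lemma mat_delete_const_pmat_mult_append_row:
  assumes W: "W \<in> carrier_mat k n" and S: "S \<in> carrier_mat n (Suc k)" and j: "j < Suc k"
  shows "mat_delete (const_pmat (append_row W w) * S) k j = const_pmat W * delete_col S j"
proof -
  have W': "append_row W w \<in> carrier_mat (Suc k) n"
    using W by (simp add: append_row_def)
  have S': "delete_col S j \<in> carrier_mat n k"
    using S by (simp add: delete_col_def)
  show ?thesis
  proof (rule eq_matI)
    fix r i
    assume "r < dim_row (const_pmat W * delete_col S j)" "i < dim_col (const_pmat W * delete_col S j)"
    then have ri: "r < k" "i < k"
      using const_pmat_mult_carrier[OF W S'] by auto
    have "mat_delete (const_pmat (append_row W w) * S) k j $$ (r, i)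
        = (const_pmat (append_row W w) * S) $$ (r, insert_index j i)"
      using W S ri by (simp add: mat_delete_def insert_index_def const_pmat_def append_row_def)
    also have "\<dots> = (const_pmat W * delete_col S j) $$ (r, i)"
      using W S ri const_pmat_mult_index[OF W' S] const_pmat_mult_index[OF W S']
      by (simp add: append_row_def delete_col_def insert_index_less)
    finally show "mat_delete (const_pmat (append_row W w) * S) k j $$ (r, i)
        = (const_pmat W * delete_col S j) $$ (r, i)" .
  qed (use W S in \<open>auto simp: const_pmat_def delete_col_def append_row_def\<close>)
qed

lemma det_const_pmat_mult_append_row:
  assumes W: "W \<in> carrier_mat k n" and S: "S \<in> carrier_mat n (Suc k)"
  shows "det (const_pmat (append_row W w) * S)
    = (\<Sum>l<n. smult (w l) (\<Sum>j<Suc k. S $$ (l,j) * ((-1)^(k+j) * det (const_pmat W * delete_col S j))))"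
proof -
  define A where "A = const_pmat (append_row W w) * S"
  have W': "append_row W w \<in> carrier_mat (Suc k) n"
    using W by (simp add: append_row_def)
  have A: "A \<in> carrier_mat (Suc k) (Suc k)"
    unfolding A_def using W' S by (rule const_pmat_mult_carrier)
  have row: "A $$ (k,j) = (\<Sum>l<n. smult (w l) (S $$ (l,j)))" if "j < Suc k" for j
    using const_pmat_mult_index[OF W' S _ that] W by (simp add: A_def append_row_def)
  have "det A = (\<Sum>j<Suc k. A $$ (k,j) * cofactor A k j)"
    by (rule laplace_expansion_row[OF A]) simp
  also have "\<dots> = (\<Sum>j<Suc k. (\<Sum>l<n. smult (w l) (S $$ (l,j))) * ((-1)^(k+j) * det (const_pmat W * delete_col S j)))"
    using row mat_delete_const_pmat_mult_append_row[OF W S]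
    by (intro sum.cong) (simp_all add: A_def cofactor_def)
  also have "\<dots> = (\<Sum>l<n. smult (w l) (\<Sum>j<Suc k. S $$ (l,j) * ((-1)^(k+j) * det (const_pmat W * delete_col S j))))"
    by (simp only: sum_distrib_right mult_smult_left smult_sum2 sum.swap[of _ "{..<Suc k}"])
  finally show ?thesis
    unfolding A_def .
qed

lemma dim_mat_adjoint [simp]:
  "dim_row (mat_adjoint A) = dim_col A" "dim_col (mat_adjoint A) = dim_row A"
  by (simp_all add: mat_adjoint_def)

lemma index_mat_adjoint:
  "i < dim_col A \<Longrightarrow> j < dim_row A \<Longrightarrow> mat_adjoint A $$ (i, j) = conjugate (A $$ (j, i))"
  by (simp add: mat_adjoint_def mat_of_rows_index)

lemma mat_adjoint_adjoint: "mat_adjoint (mat_adjoint A) = A"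
  by (rule eq_matI) (simp_all add: index_mat_adjoint)

section \<open>A constant left factor with squarefree determinant\<close>

lemma no_common_multiple_root_mult:
  fixes S :: "complex poly mat" and C :: "nat \<Rightarrow> complex poly"
  assumes S: "S \<in> carrier_mat n K" and indep: "\<forall>z. cols_independent (peval S z)"
    and j: "j < K" and C: "\<forall>z. \<not> multiple_root (C j) z"
  shows "\<not> (\<exists>z. \<forall>l<n. multiple_root (\<Sum>i<K. S $$ (l,i) * C i) z)"
proof
  assume "\<exists>z. \<forall>l<n. multiple_root (\<Sum>i<K. S $$ (l,i) * C i) z"
  then obtain z where z: "\<forall>l<n. multiple_root (\<Sum>i<K. S $$ (l,i) * C i) z" ..
  have vanish: "\<forall>i<K. c i = 0" if "\<forall>l<n. (\<Sum>i<K. poly (S $$ (l,i)) z * c i) = 0" for c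
    using indep that S unfolding cols_independent_def by (simp add: peval_def)
  have "\<forall>i<K. poly (C i) z = 0"
    using z by (intro vanish) (simp add: multiple_root_def poly_sum)
  then have "(\<Sum>i<K. poly (S $$ (l,i)) z * poly (pderiv (C i)) z)
      = poly (pderiv (\<Sum>i<K. S $$ (l,i) * C i)) z" for l
    by (simp add: pderiv_sum pderiv_mult poly_sum algebra_simps)
  then have "\<forall>i<K. poly (pderiv (C i)) z = 0"
    using z by (intro vanish) (simp add: multiple_root_def)
  with \<open>\<forall>i<K. poly (C i) z = 0\<close> have "multiple_root (C j) z"
    using j by (simp add: multiple_root_def)
  with C show False
    by blast
qed

lemma column_reduced_mult_coeff_ne_0:
  fixes S :: "'a::comm_ring_1 poly mat" and C :: "nat \<Rightarrow> 'a poly"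
  assumes S: "S \<in> carrier_mat n K" and deg: "col_degrees_le m S"
    and reduced: "cols_independent (highest_col_coeff_mat m S)"
    and degC: "\<forall>i<K. m i \<le> M \<and> degree (C i) \<le> M - m i"
    and j: "j < K" and lc: "coeff (C j) (M - m j) \<noteq> 0"
  shows "\<exists>l<n. coeff (\<Sum>i<K. S $$ (l,i) * C i) M \<noteq> 0"
proof (rule ccontr)
  assume none: "\<not> (\<exists>l<n. coeff (\<Sum>i<K. S $$ (l,i) * C i) M \<noteq> 0)"
  let ?H = "highest_col_coeff_mat m S"
  have "\<forall>l<dim_row ?H. (\<Sum>i<dim_col ?H. ?H $$ (l,i) * coeff (C i) (M - m i)) = 0"
  proof (intro allI impI)
    fix l
    assume "l < dim_row ?H"
    then have l: "l < n"
      using S by simp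
    have "coeff (S $$ (l,i) * C i) M = coeff (S $$ (l,i)) (m i) * coeff (C i) (M - m i)"
      if "i < K" for i
      using coeff_mult_at_degree_bounds[of "S $$ (l,i)" "m i" "C i" "M - m i"] degC deg S l that
      by (simp add: col_degrees_le_def)
    then have "coeff (\<Sum>i<K. S $$ (l,i) * C i) M = (\<Sum>i<dim_col ?H. ?H $$ (l,i) * coeff (C i) (M - m i))"
      using S l unfolding coeff_sum by (intro sum.cong) (auto simp: highest_col_coeff_mat_def)
    then show "(\<Sum>i<dim_col ?H. ?H $$ (l,i) * coeff (C i) (M - m i)) = 0"
      using none l by simp
  qed
  then have "\<forall>i<dim_col ?H. coeff (C i) (M - m i) = 0"
    using reduced[unfolded cols_independent_def, rule_format, where c = "\<lambda>i. coeff (C i) (M - m i)"]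
    by blast
  then have "\<forall>i<K. coeff (C i) (M - m i) = 0"
    using S by simp
  with j lc show False
    by blast
qed

lemma degree_det_const_pmat_mult_delete_col_le:
  assumes W: "W \<in> carrier_mat k n" and S: "S \<in> carrier_mat n (Suc k)"
    and deg: "col_degrees_le m S" and j: "j < Suc k"
  shows "degree (det (const_pmat W * delete_col S j)) \<le> (\<Sum>i<Suc k. m i) - m j"
proof -
  have "degree (det (const_pmat W * delete_col S j)) \<le> (\<Sum>i<k. m (insert_index j i))"
    using W S col_degrees_le_delete_col[OF deg, of j] j
    by (intro degree_det_const_pmat_mult_le) (auto simp: delete_col_def)
  also have "\<dots> = (\<Sum>i<Suc k. m i) - m j"
    unfolding sum_lessThan_Suc_insert_index[OF j] by simp
  finally show ?thesis .
qed

lemma exists_append_row_det_rsquarefree: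
  fixes S :: "complex poly mat"
  assumes S: "S \<in> carrier_mat n (Suc k)" and deg: "col_degrees_le m S"
    and indep: "\<forall>z. cols_independent (peval S z)"
    and reduced: "cols_independent (highest_col_coeff_mat m S)"
    and W: "W \<in> carrier_mat k n"
    and lc: "coeff (det (const_pmat W * delete_col S k)) (\<Sum>i<k. m i) \<noteq> 0"
    and sqfree: "rsquarefree (det (const_pmat W * delete_col S k))"
  shows "\<exists>w. coeff (det (const_pmat (append_row W w) * S)) (\<Sum>i<Suc k. m i) \<noteq> 0
           \<and> rsquarefree (det (const_pmat (append_row W w) * S))"
proof -
  define M where "M = (\<Sum>i<Suc k. m i)"
  define C where "C j = (-1)^(k+j) * det (const_pmat W * delete_col S j)" for j
  define y where "y l = (\<Sum>j<Suc k. S $$ (l,j) * C j)" for l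
  \<comment> \<open>Laplace expansion along the appended row gives \<open>\<Sum>l. w l * y l\<close>; the signed minor
    \<open>C k\<close> is the determinant assumed to be squarefree of degree \<open>\<Sum>i<k. m i\<close>.\<close>
  have det_eq: "det (const_pmat (append_row W w) * S) = (\<Sum>l<n. smult (w l) (y l))" for w
    unfolding det_const_pmat_mult_append_row[OF W S] y_def C_def ..
  have C_last: "C k = det (const_pmat W * delete_col S k)"
    by (simp add: C_def flip: mult_2)
  have degC: "\<forall>j<Suc k. m j \<le> M \<and> degree (C j) \<le> M - m j"
  proof (intro allI impI conjI)
    fix j
    assume j: "j < Suc k"
    show "m j \<le> M"
      unfolding M_def using j by (intro member_le_sum) auto
    have "degree (C j) = degree (det (const_pmat W * delete_col S j))"
      unfolding C_def by (cases "even (k + j)") auto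
    then show "degree (C j) \<le> M - m j"
      unfolding M_def using degree_det_const_pmat_mult_delete_col_le[OF W S deg j] by simp
  qed
  have "\<not> (\<exists>z. \<forall>l<n. multiple_root (y l) z)"
    unfolding y_def using S indep sqfree C_last
    by (intro no_common_multiple_root_mult[where j = k]) (auto simp: rsquarefree_iff_no_multiple_root)
  moreover have "\<exists>l<n. coeff (y l) M \<noteq> 0"
  proof -
    have "M - m k = (\<Sum>i<k. m i)"
      by (simp add: M_def)
    then show ?thesis
      unfolding y_def using S deg reduced degC lc C_last
      by (intro column_reduced_mult_coeff_ne_0[where j = k]) auto
  qed
  ultimately obtain w where w: "coeff (\<Sum>l<n. smult (w l) (y l)) M \<noteq> 0"
    "\<forall>z. \<not> multiple_root (\<Sum>l<n. smult (w l) (y l)) z"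
    using exists_combination_no_multiple_root[of "{..<n}" 0 y M] by auto
  have "coeff (det (const_pmat (append_row W w) * S)) (\<Sum>i<Suc k. m i) \<noteq> 0"
    using w(1) unfolding det_eq M_def .
  moreover have "rsquarefree (det (const_pmat (append_row W w) * S))"
    unfolding det_eq rsquarefree_iff_no_multiple_root using w(2) .
  ultimately show ?thesis
    by blast
qed

lemma exists_const_pmat_mult_det_rsquarefree:
  fixes S :: "complex poly mat"
  assumes "S \<in> carrier_mat n k" and "col_degrees_le m S"
    and "\<forall>z. cols_independent (peval S z)"
    and "cols_independent (highest_col_coeff_mat m S)"
  shows "\<exists>W\<in>carrier_mat k n. coeff (det (const_pmat W * S)) (\<Sum>i<k. m i) \<noteq> 0
           \<and> rsquarefree (det (const_pmat W * S))"
  using assms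
proof (induction k arbitrary: S)
  case 0
  then have "const_pmat (0\<^sub>m 0 n) * S = 1\<^sub>m 0"
    using const_pmat_mult_carrier[of "0\<^sub>m 0 n" 0 n S 0] by (intro eq_matI) auto
  then show ?case
    by (intro bexI[of _ "0\<^sub>m 0 n"]) (simp_all add: rsquarefree_def)
next
  case (Suc k)
  note S = Suc.prems(1) and deg = Suc.prems(2)
  have "delete_col S k \<in> carrier_mat n k"
    using S by (simp add: delete_col_def)
  moreover have "col_degrees_le m (delete_col S k)"
    using col_degrees_le_delete_col[OF deg, of k] S by (auto simp: col_degrees_le_def delete_col_def)
  moreover have "\<forall>z. cols_independent (peval (delete_col S k) z)"
    using Suc.prems(3) S by (simp add: peval_delete_col cols_independent_delete_col)
  moreover have "cols_independent (highest_col_coeff_mat m (delete_col S k))"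
    using Suc.prems(4) S by (simp add: highest_col_coeff_mat_delete_last_col cols_independent_delete_col)
  ultimately obtain W where W: "W \<in> carrier_mat k n"
    and "coeff (det (const_pmat W * delete_col S k)) (\<Sum>i<k. m i) \<noteq> 0"
    and "rsquarefree (det (const_pmat W * delete_col S k))"
    using Suc.IH by blast
  then obtain w where "coeff (det (const_pmat (append_row W w) * S)) (\<Sum>i<Suc k. m i) \<noteq> 0"
    and "rsquarefree (det (const_pmat (append_row W w) * S))"
    using exists_append_row_det_rsquarefree[OF S deg Suc.prems(3,4)] by blast
  moreover have "append_row W w \<in> carrier_mat (Suc k) n"
    using W by (simp add: append_row_def)
  ultimately show ?case
    by blast
qed

section \<open>Consequences of minimality\<close>

lemma dim_fmat [simp]: "dim_row (fmat A) = dim_row A" "dim_col (fmat A) = dim_col A"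
  by (simp_all add: fmat_def)

lemma fmat_carrier: "A \<in> carrier_mat n k \<Longrightarrow> fmat A \<in> carrier_mat n k"
  by (intro carrier_matI) auto

lemma col_fmat: "i < dim_col A \<Longrightarrow> col (fmat A) i = map_vec to_fract (col A i)"
  by (auto simp: fmat_def)

lemma fmat_mult_mat_vec:
  assumes "A \<in> carrier_mat n k" and "b \<in> carrier_vec k"
  shows "fmat A *\<^sub>v map_vec to_fract b = map_vec to_fract (A *\<^sub>v b)"
proof -
  interpret inj_comm_ring_hom "to_fract :: complex poly \<Rightarrow> complex poly fract"
    by unfold_locales auto
  show ?thesis
    using mult_mat_vec_hom[OF assms] by (simp add: fmat_def)
qed

lemma fmat_mult_eq_0:
  assumes cols: "\<forall>i<dim_col S. map_vec to_fract (col S i) \<in> right_nullspace P"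
    and dims: "dim_row S = dim_col P"
  shows "fmat P * fmat S = 0\<^sub>m (dim_row P) (dim_col S)"
proof (rule mat_col_eqI)
  fix i
  assume i: "i < dim_col (0\<^sub>m (dim_row P) (dim_col S) :: complex poly fract mat)"
  have "fmat P \<in> carrier_mat (dim_row P) (dim_col P)"
    by (rule carrier_matI) simp_all
  moreover have "fmat S \<in> carrier_mat (dim_col P) (dim_col S)"
    using dims by (intro carrier_matI) simp_all
  moreover have "i < dim_col S"
    using i by simp
  ultimately have "col (fmat P * fmat S) i = fmat P *\<^sub>v col (fmat S) i"
    by (rule col_mult2)
  also have "\<dots> = fmat P *\<^sub>v map_vec to_fract (col S i)"
    using i by (simp add: col_fmat)
  also have "\<dots> = 0\<^sub>v (dim_row P)"
    using cols i by (simp add: right_nullspace_def)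
  finally show "col (fmat P * fmat S) i = col (0\<^sub>m (dim_row P) (dim_col S)) i"
    using i by simp
qed simp_all

lemma mult_mat_vec_mem_right_nullspace:
  assumes cols: "\<forall>i<dim_col S. map_vec to_fract (col S i) \<in> right_nullspace P"
    and dims: "dim_row S = dim_col P" and v: "dim_vec v = dim_col S"
  shows "fmat S *\<^sub>v v \<in> right_nullspace P"
proof -
  have "fmat P *\<^sub>v (fmat S *\<^sub>v v) = (fmat P * fmat S) *\<^sub>v v"
    by (rule assoc_mult_mat_vec[symmetric, of _ "dim_row P" "dim_col P" _ "dim_col S"])
      (use dims v in \<open>auto intro!: carrier_matI carrier_vecI\<close>)
  also have "\<dots> = 0\<^sub>v (dim_row P)"
    unfolding fmat_mult_eq_0[OF cols dims] using v by (intro eq_vecI) (auto intro!: scalar_prod_left_zero carrier_vecI)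
  finally show ?thesis
    using dims v by (simp add: right_nullspace_def)
qed

lemma poly_basis_right_nullspace_mult_invertible:
  assumes basis: "poly_basis_right_nullspace P S"
    and S: "S \<in> carrier_mat n k" and T: "T \<in> carrier_mat n k"
    and E: "E \<in> carrier_mat k k" and det: "det E \<noteq> 0" and TSE: "fmat T = fmat S * E"
  shows "poly_basis_right_nullspace P T"
proof -
  define F where "F = inverse (det E) \<cdot>\<^sub>m adj_mat E"
  have F: "F \<in> carrier_mat k k"
    using adj_mat(1)[OF E] by (simp add: F_def)
  have "E * F = inverse (det E) \<cdot>\<^sub>m (E * adj_mat E)"
    using E adj_mat(1)[OF E] by (simp add: F_def mult_smult_distrib)
  also have "\<dots> = 1\<^sub>m k"
    unfolding adj_mat(2)[OF E] using det by (intro eq_matI) auto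
  finally have EF: "E * F = 1\<^sub>m k" .
  then have FE: "F * E = 1\<^sub>m k"
    by (rule mat_mult_left_right_inverse[OF E F])
  have fS: "fmat S \<in> carrier_mat n k"
    using S by (rule fmat_carrier)
  note S_props = basis[unfolded poly_basis_right_nullspace_def]
  have TE_v: "fmat T *\<^sub>v v = fmat S *\<^sub>v (E *\<^sub>v v)" if "dim_vec v = k" for v
    unfolding TSE using fS E that by (intro assoc_mult_mat_vec) (auto intro: carrier_vecI)
  have "map_vec to_fract (col T i) \<in> right_nullspace P" if "i < k" for i
  proof -
    have "map_vec to_fract (col T i) = fmat S *\<^sub>v col E i"
      using col_fmat[of i T] col_mult2[OF fS E that] T that by (simp add: TSE)
    then show ?thesis
      using S_props S E that by (simp add: mult_mat_vec_mem_right_nullspace)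
  qed
  moreover have "c = 0\<^sub>v k" if c: "dim_vec c = k" "fmat T *\<^sub>v c = 0\<^sub>v n" for c
  proof -
    have "E *\<^sub>v c = 0\<^sub>v k"
      using S_props S E c TE_v[of c] by auto
    then have "F *\<^sub>v (E *\<^sub>v c) = 0\<^sub>v k"
      using F by auto
    then show ?thesis
      using assoc_mult_mat_vec[OF F E, of c] FE c by (auto intro: carrier_vecI)
  qed
  moreover have "\<exists>d. dim_vec d = k \<and> x = fmat T *\<^sub>v d" if x: "x \<in> right_nullspace P" for x
  proof -
    obtain c where c: "dim_vec c = k" "x = fmat S *\<^sub>v c"
      using S_props S x by auto
    have "c = E *\<^sub>v (F *\<^sub>v c)"
      using assoc_mult_mat_vec[OF E F, of c] EF c by (auto intro: carrier_vecI)
    then show ?thesis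
      using c F TE_v[of "F *\<^sub>v c"] by (intro exI[of _ "F *\<^sub>v c"]) auto
  qed
  ultimately show ?thesis
    using S_props S T unfolding poly_basis_right_nullspace_def by auto
qed

lemma col_replace_col_one:
  fixes v :: "'a::comm_ring_1 vec"
  assumes "v \<in> carrier_vec k" and "i < k"
  shows "col (replace_col (1\<^sub>m k) v j) i = (if i = j then v else unit_vec k i)"
  using assms by (intro eq_vecI) (auto simp: replace_col_def unit_vec_def)

lemma mult_replace_col_one:
  fixes A :: "'a::comm_ring_1 mat"
  assumes A: "A \<in> carrier_mat n k" and v: "v \<in> carrier_vec k"
  shows "A * replace_col (1\<^sub>m k) v j = replace_col A (A *\<^sub>v v) j"
proof (rule eq_matI)
  fix l i
  assume "l < dim_row (replace_col A (A *\<^sub>v v) j)" "i < dim_col (replace_col A (A *\<^sub>v v) j)"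
  then have l: "l < n" and i: "i < k"
    using A by (auto simp: replace_col_def)
  then show "(A * replace_col (1\<^sub>m k) v j) $$ (l, i) = replace_col A (A *\<^sub>v v) j $$ (l, i)"
    using A v col_replace_col_one[OF v i, of j]
    by (auto simp: replace_col_def scalar_prod_right_unit)
qed (use A in \<open>auto simp: replace_col_def\<close>)

lemma fmat_replace_col:
  "dim_vec x = dim_row S \<Longrightarrow> fmat (replace_col S x j) = replace_col (fmat S) (map_vec to_fract x) j"
  by (intro eq_matI) (auto simp: replace_col_def fmat_def)

lemma poly_basis_right_nullspace_replace_col:
  assumes basis: "poly_basis_right_nullspace P S" and S: "S \<in> carrier_mat n k" and j: "j < k"
    and a: "a \<noteq> 0" and b: "b \<in> carrier_vec k" "b $ j \<noteq> 0"
    and x: "x \<in> carrier_vec n" and comb: "a \<cdot>\<^sub>v x = S *\<^sub>v b"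
  shows "poly_basis_right_nullspace P (replace_col S x j)"
proof -
  define \<beta> where "\<beta> = inverse (to_fract a) \<cdot>\<^sub>v map_vec to_fract b"
  define E where "E = replace_col (1\<^sub>m k) \<beta> j"
  have \<beta>: "\<beta> \<in> carrier_vec k"
    using b by (simp add: \<beta>_def)
  have E: "E \<in> carrier_mat k k"
    by (intro carrier_matI) (simp_all add: E_def replace_col_def)
  have "det E = \<beta> $ j * det (1\<^sub>m k)"
    using cramer_lemma_mat[OF one_carrier_mat \<beta> j] \<beta> by (simp add: E_def)
  then have "det E \<noteq> 0"
    using a b j by (simp add: \<beta>_def)
  moreover have S\<beta>: "fmat S *\<^sub>v \<beta> = map_vec to_fract x"
  proof -
    have "fmat S *\<^sub>v \<beta> = inverse (to_fract a) \<cdot>\<^sub>v (fmat S *\<^sub>v map_vec to_fract b)"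
      unfolding \<beta>_def by (rule mult_mat_vec[OF fmat_carrier[OF S]]) (use b in simp)
    also have "\<dots> = inverse (to_fract a) \<cdot>\<^sub>v map_vec to_fract (a \<cdot>\<^sub>v x)"
      unfolding fmat_mult_mat_vec[OF S b(1)] comb ..
    also have "\<dots> = map_vec to_fract x"
      using a by (intro eq_vecI) auto
    finally show ?thesis .
  qed
  moreover have "fmat (replace_col S x j) = fmat S * E"
  proof -
    have "dim_vec x = dim_row S"
      using x S by (simp add: carrier_vecD carrier_matD)
    then have "fmat (replace_col S x j) = replace_col (fmat S) (fmat S *\<^sub>v \<beta>) j"
      unfolding S\<beta> by (rule fmat_replace_col)
    also have "\<dots> = fmat S * E"
      unfolding E_def by (rule mult_replace_col_one[OF fmat_carrier[OF S] \<beta>, symmetric])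
    finally show ?thesis .
  qed
  moreover have "replace_col S x j \<in> carrier_mat n k"
    using S by (intro carrier_matI) (simp_all add: replace_col_def carrier_matD)
  ultimately show ?thesis
    using poly_basis_right_nullspace_mult_invertible[OF basis S _ E] by blast
qed

lemma degree_le_vdeg: "i < dim_vec v \<Longrightarrow> degree (v $ i) \<le> vdeg v"
  unfolding vdeg_def by (rule Max_ge) auto

lemma vdeg_le_iff: "vdeg v \<le> N \<longleftrightarrow> (\<forall>i<dim_vec v. degree (v $ i) \<le> N)"
proof -
  have "{degree (v $ i) |i. i < dim_vec v} = (\<lambda>i. degree (v $ i)) ` {..<dim_vec v}"
    by auto
  then show ?thesis
    unfolding vdeg_def by auto
qed

text \<open>Replacing column \<open>j\<close> by \<open>x\<close> gives another polynomial basis, so by minimality \<open>x\<close> cannot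
  have smaller degree than the column it replaces.\<close>

lemma minimal_basis_right_nullspace_exchange:
  assumes minimal: "minimal_basis_right_nullspace P S" and S: "S \<in> carrier_mat n k" and j: "j < k"
    and a: "a \<noteq> 0" and b: "b \<in> carrier_vec k" "b $ j \<noteq> 0"
    and x: "x \<in> carrier_vec n" and comb: "a \<cdot>\<^sub>v x = S *\<^sub>v b"
  shows "\<exists>l<n. x $ l \<noteq> 0 \<and> vdeg (col S j) \<le> degree (x $ l)"
proof (rule ccontr)
  assume low: "\<not> (\<exists>l<n. x $ l \<noteq> 0 \<and> vdeg (col S j) \<le> degree (x $ l))"
  have basis: "poly_basis_right_nullspace P S"
    using minimal by (simp add: minimal_basis_right_nullspace_def)
  have "x \<noteq> 0\<^sub>v n"
  proof
    assume "x = 0\<^sub>v n"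
    then have "fmat S *\<^sub>v map_vec to_fract b = 0\<^sub>v n"
      using fmat_mult_mat_vec[OF S b(1)] comb S by (auto simp flip: comb)
    then have "map_vec to_fract b = 0\<^sub>v k"
      using basis S b unfolding poly_basis_right_nullspace_def by auto
    then show False
      using b j by (metis carrier_vecD index_map_vec(1) index_zero_vec(1) to_fract_eq_0_iff)
  qed
  then have "\<exists>l<n. x $ l \<noteq> 0"
    using x by (metis carrier_vecD eq_vecI index_zero_vec)
  with low have pos: "0 < vdeg (col S j)"
    by auto
  define T where "T = replace_col S x j"
  have T: "T \<in> carrier_mat n k"
    using S by (intro carrier_matI) (simp_all add: T_def replace_col_def carrier_matD)
  have col_T: "col T i = (if i = j then x else col S i)" if "i < k" for i
    using S x that by (intro eq_vecI) (auto simp: T_def replace_col_def)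
  have "vdeg x \<le> vdeg (col S j) - 1"
    unfolding vdeg_le_iff
  proof (intro allI impI)
    fix l
    assume "l < dim_vec x"
    then show "degree (x $ l) \<le> vdeg (col S j) - 1"
      using low x by (cases "x $ l = 0") auto
  qed
  then have "vdeg x < vdeg (col S j)"
    using pos by simp
  then have "(\<Sum>i<k. vdeg (col T i)) < (\<Sum>i<k. vdeg (col S i))"
    using j col_T by (intro sum_strict_mono_ex1) auto
  moreover have "poly_basis_right_nullspace P T"
    unfolding T_def by (rule poly_basis_right_nullspace_replace_col[OF basis S j a b x comb])
  then have "col_deg_sum S \<le> col_deg_sum T"
    using minimal by (simp add: minimal_basis_right_nullspace_def)
  ultimately show False
    using S T by (simp add: col_deg_sum_def carrier_matD)
qed

lemma obtain_max_on_support: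
  fixes c :: "nat \<Rightarrow> 'a::zero" and f :: "nat \<Rightarrow> nat"
  assumes "\<exists>i<k. c i \<noteq> 0"
  obtains j where "j < k" "c j \<noteq> 0" "\<And>i. i < k \<Longrightarrow> c i \<noteq> 0 \<Longrightarrow> f i \<le> f j"
proof -
  have "f i < Suc (\<Sum>i<k. f i)" if "i < k" for i
    using that by (simp add: le_imp_less_Suc member_le_sum)
  then show thesis
    using ex_has_greatest_nat[of "\<lambda>i. i < k \<and> c i \<noteq> 0" _ f "Suc (\<Sum>i<k. f i)"] assms that
    by blast
qed

lemma col_degrees_le_vdeg: "col_degrees_le (\<lambda>i. vdeg (col S i)) S"
  unfolding col_degrees_le_def
proof (intro allI impI)
  fix l i
  assume "l < dim_row S" "i < dim_col S"
  then show "degree (S $$ (l,i)) \<le> vdeg (col S i)"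
    using degree_le_vdeg[of l "col S i"] by simp
qed

text \<open>A dependency at \<open>z\<close> gives a constant combination \<open>S b\<close> vanishing at \<open>z\<close>; dividing it by
  \<open>\<lambda> - z\<close> lowers the degree of the column of largest degree involved.\<close>

lemma minimal_basis_right_nullspace_cols_independent_peval:
  assumes minimal: "minimal_basis_right_nullspace P S" and S: "S \<in> carrier_mat n k"
  shows "cols_independent (peval S z)"
  unfolding cols_independent_def
proof (rule allI, rule impI, rule ccontr)
  fix c
  assume comb: "\<forall>l<dim_row (peval S z). (\<Sum>i<dim_col (peval S z). peval S z $$ (l,i) * c i) = 0"
    and "\<not> (\<forall>i<dim_col (peval S z). c i = 0)"
  then obtain j where j: "j < k" "c j \<noteq> 0"
    and max: "\<And>i. i < k \<Longrightarrow> c i \<noteq> 0 \<Longrightarrow> vdeg (col S i) \<le> vdeg (col S j)"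
    using obtain_max_on_support[of k c "\<lambda>i. vdeg (col S i)"] S by auto
  define b where "b = vec k (\<lambda>i. [:c i:])"
  define q where "q = S *\<^sub>v b"
  define d where "d = [:-z, 1:]"
  define x where "x = vec n (\<lambda>l. q $ l div d)"
  have q: "q $ l = (\<Sum>i<k. S $$ (l,i) * [:c i:])" if "l < n" for l
    using S that by (auto simp: q_def b_def scalar_prod_def atLeast0LessThan intro!: sum.cong)
  have dvd: "d dvd q $ l" if "l < n" for l
    using comb S that by (simp add: d_def q poly_sum poly_eq_0_iff_dvd[symmetric] peval_def mult.commute)
  then have "d \<cdot>\<^sub>v x = S *\<^sub>v b"
    using S by (intro eq_vecI) (simp_all add: x_def q_def)
  then obtain l where l: "l < n" "x $ l \<noteq> 0" and deg_x: "vdeg (col S j) \<le> degree (x $ l)"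
    using minimal_basis_right_nullspace_exchange[OF minimal S j(1), of d b x] j
    by (auto simp: b_def x_def d_def)
  have deg_q: "degree (q $ l) \<le> vdeg (col S j)"
    unfolding q[OF l(1)]
  proof (rule degree_sum_le)
    fix i
    assume "i \<in> {..<k}"
    then have "degree (S $$ (l,i)) \<le> vdeg (col S i)"
      using degree_le_vdeg[of l "col S i"] S l by simp
    then show "degree (S $$ (l,i) * [:c i:]) \<le> vdeg (col S j)"
      using max \<open>i \<in> {..<k}\<close> by (cases "c i = 0") (auto intro: le_trans degree_mult_le)
  qed simp
  have "q $ l = d * x $ l"
    using dvd_mult_div_cancel[OF dvd[OF l(1)]] l by (simp add: x_def)
  moreover have "d \<noteq> 0" "degree d = 1"
    by (simp_all add: d_def)
  ultimately have "degree (q $ l) = Suc (degree (x $ l))"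
    using l by (simp add: degree_mult_eq)
  with deg_q deg_x show False
    by simp
qed

lemma degree_shifted_combination_le:
  fixes p :: "'i \<Rightarrow> 'a::comm_semiring_1 poly"
  assumes "finite I" and "\<forall>i\<in>I. degree (p i) \<le> m i" and "\<forall>i\<in>I. c i \<noteq> 0 \<longrightarrow> m i \<le> D"
  shows "degree (\<Sum>i\<in>I. p i * monom (c i) (D - m i)) \<le> D"
proof (rule degree_sum_le[OF assms(1)])
  fix i
  assume i: "i \<in> I"
  show "degree (p i * monom (c i) (D - m i)) \<le> D"
  proof (cases "c i = 0")
    case False
    have "degree (p i * monom (c i) (D - m i)) \<le> m i + (D - m i)"
      using assms(2) i degree_monom_le by (intro order.trans[OF degree_mult_le] add_mono) auto
    then show ?thesis
      using assms(3) i False by simp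
  qed simp
qed

lemma coeff_shifted_combination:
  fixes p :: "'i \<Rightarrow> 'a::comm_semiring_1 poly"
  assumes "\<forall>i\<in>I. c i \<noteq> 0 \<longrightarrow> m i \<le> D"
  shows "coeff (\<Sum>i\<in>I. p i * monom (c i) (D - m i)) D = (\<Sum>i\<in>I. coeff (p i) (m i) * c i)"
  unfolding coeff_sum
proof (rule sum.cong)
  fix i
  assume "i \<in> I"
  then show "coeff (p i * monom (c i) (D - m i)) D = coeff (p i) (m i) * c i"
    using assms
    by (cases "c i = 0") (auto simp: mult.commute[of _ "monom _ _"] mult.commute[of "c i"] coeff_monom_mult)
qed simp

text \<open>A dependency among the highest coefficients gives a combination of the columns, shifted to a
  common degree, in which the top coefficients cancel.\<close>

lemma minimal_basis_right_nullspace_column_reduced: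
  assumes minimal: "minimal_basis_right_nullspace P S" and S: "S \<in> carrier_mat n k"
  shows "cols_independent (highest_col_coeff_mat (\<lambda>i. vdeg (col S i)) S)"
  unfolding cols_independent_def
proof (rule allI, rule impI, rule ccontr)
  fix c
  define m where "m = (\<lambda>i. vdeg (col S i))"
  assume comb: "\<forall>l<dim_row (highest_col_coeff_mat (\<lambda>i. vdeg (col S i)) S).
      (\<Sum>i<dim_col (highest_col_coeff_mat (\<lambda>i. vdeg (col S i)) S).
        highest_col_coeff_mat (\<lambda>i. vdeg (col S i)) S $$ (l,i) * c i) = 0"
    and "\<not> (\<forall>i<dim_col (highest_col_coeff_mat (\<lambda>i. vdeg (col S i)) S). c i = 0)"
  then obtain j where j: "j < k" "c j \<noteq> 0" and max: "\<And>i. i < k \<Longrightarrow> c i \<noteq> 0 \<Longrightarrow> m i \<le> m j"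
    using obtain_max_on_support[of k c m] S by auto
  define b where "b = vec k (\<lambda>i. monom (c i) (m j - m i))"
  define x where "x = S *\<^sub>v b"
  have x: "x $ l = (\<Sum>i<k. S $$ (l,i) * monom (c i) (m j - m i))" if "l < n" for l
    using S that by (auto simp: x_def b_def scalar_prod_def atLeast0LessThan intro!: sum.cong)
  have "1 \<cdot>\<^sub>v x = S *\<^sub>v b"
    by (simp add: x_def)
  then obtain l where l: "l < n" "x $ l \<noteq> 0" and deg_x: "m j \<le> degree (x $ l)"
    using minimal_basis_right_nullspace_exchange[OF minimal S j(1), of 1 b x] j S
    by (auto simp: b_def x_def m_def)
  have degS: "\<forall>i\<in>{..<k}. degree (S $$ (l,i)) \<le> m i"
    using col_degrees_le_vdeg[of S] S l by (simp add: col_degrees_le_def m_def)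
  have below: "\<forall>i\<in>{..<k}. c i \<noteq> 0 \<longrightarrow> m i \<le> m j"
    using max by blast
  have "degree (x $ l) \<le> m j"
    unfolding x[OF l(1)] by (rule degree_shifted_combination_le[OF finite_lessThan degS below])
  moreover have "coeff (x $ l) (m j) = 0"
    unfolding x[OF l(1)] coeff_shifted_combination[OF below]
    using comb S l by (simp add: m_def highest_col_coeff_mat_def)
  ultimately have "x $ l = 0"
    using deg_x by (metis le_antisym leading_coeff_0_iff)
  with l show False
    by simp
qed

theorem theoremA3:
  fixes P S :: "complex poly mat" and n k d :: nat and m :: "nat \<Rightarrow> nat"
  assumes "P \<in> carrier_mat n n"
    and "singular_pmat P"
    and "mdeg P = d"
    and "nrank P = n - k" and "k \<le> n"
    and "S \<in> carrier_mat n k"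
    and "minimal_basis_right_nullspace P S"
    and "\<forall>i < k. m i = vdeg (col S i)"
  shows "\<exists>V \<in> carrier_mat n k.
           det (const_pmat (mat_adjoint V) * S) \<noteq> 0 \<and>
           num_simple_zeros (det (const_pmat (mat_adjoint V) * S)) = (\<Sum>i < k. m i)"
proof -
  note S = assms(6) and minimal = assms(7)
  have M: "(\<Sum>i<k. m i) = (\<Sum>i<k. vdeg (col S i))"
    using assms(8) by simp
  obtain W where W: "W \<in> carrier_mat k n"
    and lc: "coeff (det (const_pmat W * S)) (\<Sum>i<k. m i) \<noteq> 0"
    and sqfree: "rsquarefree (det (const_pmat W * S))"
    unfolding M
    using exists_const_pmat_mult_det_rsquarefree[OF S col_degrees_le_vdeg
        allI[OF minimal_basis_right_nullspace_cols_independent_peval[OF minimal S]]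
        minimal_basis_right_nullspace_column_reduced[OF minimal S]]
    by blast
  have "degree (det (const_pmat W * S)) = (\<Sum>i<k. m i)"
    using degree_det_const_pmat_mult_le[OF W S col_degrees_le_vdeg] le_degree[OF lc] M
    by simp
  then have "num_simple_zeros (det (const_pmat W * S)) = (\<Sum>i<k. m i)"
    using num_simple_zeros_rsquarefree[OF sqfree] by simp
  moreover have "mat_adjoint W \<in> carrier_mat n k"
    using W by (intro carrier_matI) auto
  ultimately show ?thesis
    using lc mat_adjoint_adjoint[of W] by (intro bexI[of _ "mat_adjoint W"]) auto
qed

end
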